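(* Let $G$ be a graph with adjacency matrix $A$, signless Laplacian $Q$, and maximum degree $\Delta$. (i) If $0\le\alpha\le1/2$, then $\rho(A_\alpha(G))\le\alpha\rho(Q)+(1-2\alpha)\rho(A)$. If $G$ is connected and irregular, equality holds if and only if $\alpha=0$ or $\alpha=1/2$. (ii) If $1/2\le\alpha\le1$, then $\rho(A_\alpha(G))\le(1-\alpha)\rho(Q)+(2\alpha-1)\Delta$. If $G$ is connected and irregular, equality holds if and only if $\alpha=1/2$ or $\alpha=1$.
   Context: For a graph $G$, $A(G)$ is the adjacency matrix, $D(G)$ the diagonal degree matrix, $Q(G)=D(G)+A(G)$ the signless Laplacian, and $A_\alpha(G)=\alpha D(G)+(1-\alpha)A(G)$ for $\alpha\in[0,1]$. $\rho(M)$ is the largest eigenvalue of a real symmetric matrix $M$. A graph is irregular if not all its vertices have the same degree. *)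

theory Defs
  imports "HOL-Analysis.Analysis"
begin

definition simple_graph :: "('n::finite \<Rightarrow> 'n \<Rightarrow> bool) \<Rightarrow> bool" where
  "simple_graph E \<longleftrightarrow> (\<forall>u v. E u v \<longleftrightarrow> E v u) \<and> (\<forall>u. \<not> E u u)"

definition degree :: "('n::finite \<Rightarrow> 'n \<Rightarrow> bool) \<Rightarrow> 'n \<Rightarrow> real" where
  "degree E u = real (card {v. E u v})"

definition max_degree :: "('n::finite \<Rightarrow> 'n \<Rightarrow> bool) \<Rightarrow> real" where
  "max_degree E = Max (range (degree E))"

definition adj_matrix :: "('n::finite \<Rightarrow> 'n \<Rightarrow> bool) \<Rightarrow> real^'n^'n" where
  "adj_matrix E = (\<chi> i j. if E i j then 1 else 0)"

definition deg_matrix :: "('n::finite \<Rightarrow> 'n \<Rightarrow> bool) \<Rightarrow> real^'n^'n" where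
  "deg_matrix E = (\<chi> i j. if i = j then degree E i else 0)"

definition signless_laplacian :: "('n::finite \<Rightarrow> 'n \<Rightarrow> bool) \<Rightarrow> real^'n^'n" where
  "signless_laplacian E = deg_matrix E + adj_matrix E"

definition A_alpha :: "real \<Rightarrow> ('n::finite \<Rightarrow> 'n \<Rightarrow> bool) \<Rightarrow> real^'n^'n" where
  "A_alpha \<alpha> E = \<alpha> *\<^sub>R deg_matrix E + (1 - \<alpha>) *\<^sub>R adj_matrix E"

definition is_eigenvalue :: "real^'n^'n \<Rightarrow> real \<Rightarrow> bool" where
  "is_eigenvalue M c \<longleftrightarrow> (\<exists>v. v \<noteq> 0 \<and> M *v v = c *\<^sub>R v)"

definition spectral_max :: "real^'n^'n \<Rightarrow> real" where
  "spectral_max M = Max {c. is_eigenvalue M c}"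

definition connected_graph :: "('n::finite \<Rightarrow> 'n \<Rightarrow> bool) \<Rightarrow> bool" where
  "connected_graph E \<longleftrightarrow> (\<forall>u v. E\<^sup>*\<^sup>* u v)"

definition irregular :: "('n::finite \<Rightarrow> 'n \<Rightarrow> bool) \<Rightarrow> bool" where
  "irregular E \<longleftrightarrow> (\<exists>u v. degree E u \<noteq> degree E v)"

end

theory Submission
  imports Defs
begin

text \<open>
  For a symmetric matrix the largest eigenvalue is the maximum of the Rayleigh quotient, and
  for a nonnegative matrix the maximum is attained at a nonnegative vector. Since
  \<open>A\<^sub>\<alpha> = \<alpha>Q + (1 - 2\<alpha>)A = (1 - \<alpha>)Q + (2\<alpha> - 1)D\<close>, both bounds are the subadditivity of the
  maximum of a sum of quadratic forms, with \<open>\<rho>(D) = \<Delta>\<close>. If equality holds with both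
  coefficients positive, a nonnegative maximiser of \<open>A\<^sub>\<alpha>\<close> maximises both summands, so it is a
  common eigenvector of \<open>A\<close> and \<open>D\<close>. On a connected graph a nonnegative eigenvector of \<open>A\<close> has
  no zero entries, and then \<open>Dx = cx\<close> forces all degrees to equal \<open>c\<close>.
\<close>

section \<open>The largest eigenvalue of a symmetric matrix\<close>

definition quadratic_form :: "real^'n^'n \<Rightarrow> real^'n \<Rightarrow> real" where
  "quadratic_form M x = x \<bullet> (M *v x)"

lemma quadratic_form_add: "quadratic_form (M + N) x = quadratic_form M x + quadratic_form N x"
  by (simp add: quadratic_form_def matrix_vector_mult_add_rdistrib inner_add_right)

lemma quadratic_form_scaleR_matrix: "quadratic_form (c *\<^sub>R M) x = c * quadratic_form M x"
  by (simp add: quadratic_form_def scaleR_matrix_vector_assoc[symmetric])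

lemma quadratic_form_scaleR: "quadratic_form M (c *\<^sub>R x) = c\<^sup>2 * quadratic_form M x"
  by (simp add: quadratic_form_def matrix_vector_mult_scaleR power2_eq_square)

lemma quadratic_form_eq_sum:
  "quadratic_form M x = (\<Sum>i\<in>UNIV. \<Sum>j\<in>UNIV. x$i * M$i$j * x$j)"
  by (simp add: quadratic_form_def inner_vec_def matrix_vector_mult_def sum_distrib_left mult.assoc)

lemma transpose_add: "transpose (M + N) = transpose M + transpose N"
  by (simp add: transpose_def vec_eq_iff)

lemma inner_matrix_vector_symmetric:
  fixes M :: "real^'n^'n"
  assumes "transpose M = M"
  shows "x \<bullet> (M *v y) = (M *v x) \<bullet> y"
proof -
  have "x \<bullet> (M *v y) = (x v* M) \<bullet> y"
    by (rule dot_lmul_matrix[symmetric])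
  also have "x v* M = M *v x"
    using assms by (metis transpose_matrix_vector)
  finally show ?thesis .
qed

lemma quadratic_form_attains_max:
  fixes M :: "real^'n^'n"
  shows "\<exists>x. x \<bullet> x = 1 \<and> (\<forall>y. quadratic_form M y \<le> quadratic_form M x * (y \<bullet> y))"
proof -
  have "continuous_on (sphere 0 1) (quadratic_form M)"
    unfolding quadratic_form_def
    by (intro continuous_intros linear_continuous_on matrix_vector_mul_bounded_linear)
  then obtain x where x: "x \<in> sphere 0 1"
    and max: "\<forall>y\<in>sphere 0 1. quadratic_form M y \<le> quadratic_form M x"
    using continuous_attains_sup[of "sphere 0 1" "quadratic_form M"] compact_sphere by fastforce
  have "quadratic_form M y \<le> quadratic_form M x * (y \<bullet> y)" for y
  proof (cases "y = 0")
    case True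
    then show ?thesis by (simp add: quadratic_form_def)
  next
    case False
    then have "quadratic_form M ((1 / norm y) *\<^sub>R y) \<le> quadratic_form M x"
      using max by simp
    then have "(1 / norm y)\<^sup>2 * quadratic_form M y \<le> quadratic_form M x"
      by (simp add: quadratic_form_scaleR)
    moreover have "y \<bullet> y = (norm y)\<^sup>2"
      by (simp add: power2_norm_eq_inner)
    ultimately show ?thesis
      using False by (simp add: field_simps)
  qed
  moreover have "x \<bullet> x = 1"
    using x by (simp add: dot_square_norm)
  ultimately show ?thesis
    by blast
qed

lemma eq_0_if_quadratic_nonpos:
  fixes a K :: real
  assumes "0 \<le> a" and "\<And>t. 2 * t * a + t\<^sup>2 * K \<le> 0"
  shows "a = 0"
proof (rule ccontr)
  assume "a \<noteq> 0"
  with assms(1) have a: "a > 0" by simp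
  define t where "t = a / (1 + \<bar>K\<bar>)"
  have t: "t > 0" and "t * \<bar>K\<bar> < a"
    using a by (auto simp: t_def field_simps)
  have "t * (2 * a + t * K) \<le> 0"
    using assms(2)[of t] by (simp add: power2_eq_square algebra_simps)
  then have "2 * a + t * K \<le> 0"
    using t by (simp add: mult_le_0_iff)
  moreover have "- (t * K) \<le> t * \<bar>K\<bar>"
    using t by (simp add: abs_if)
  ultimately show False
    using \<open>t * \<bar>K\<bar> < a\<close> a by linarith
qed

text \<open>The bound along the line \<open>x + tw\<close> with \<open>w = Mx - lx\<close> forces \<open>w \<bullet> w = 0\<close>.\<close>

lemma eigenvector_if_quadratic_form_max:
  fixes M :: "real^'n^'n"
  assumes sym: "transpose M = M"
    and le: "\<And>y. quadratic_form M y \<le> l * (y \<bullet> y)"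
    and eq: "quadratic_form M x = l * (x \<bullet> x)"
  shows "M *v x = l *\<^sub>R x"
proof -
  define w where "w = M *v x - l *\<^sub>R x"
  define K where "K = quadratic_form M w - l * (w \<bullet> w)"
  have "2 * t * (w \<bullet> w) + t\<^sup>2 * K \<le> 0" for t
  proof -
    have Mw: "x \<bullet> (M *v w) = w \<bullet> (M *v x)"
      using inner_matrix_vector_symmetric[OF sym, of x w] by (simp add: inner_commute)
    have "quadratic_form M (x + t *\<^sub>R w)
        = quadratic_form M x + 2 * t * (w \<bullet> (M *v x)) + t\<^sup>2 * quadratic_form M w"
      unfolding quadratic_form_def using Mw
      by (simp add: matrix_vector_right_distrib matrix_vector_mult_scaleR inner_add_left
          inner_add_right power2_eq_square inner_commute algebra_simps)
    moreover have "(x + t *\<^sub>R w) \<bullet> (x + t *\<^sub>R w) = x \<bullet> x + 2 * t * (w \<bullet> x) + t\<^sup>2 * (w \<bullet> w)"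
      by (simp add: inner_add_left inner_add_right power2_eq_square inner_commute algebra_simps)
    moreover have "w \<bullet> (M *v x) = w \<bullet> w + l * (w \<bullet> x)"
      by (simp add: w_def inner_diff_right inner_diff_left algebra_simps)
    ultimately show ?thesis
      using le[of "x + t *\<^sub>R w"] eq by (simp add: K_def algebra_simps)
  qed
  then have "w \<bullet> w = 0"
    using eq_0_if_quadratic_nonpos[of "w \<bullet> w" K] by simp
  then show ?thesis
    by (simp add: w_def)
qed

lemma finite_eigenvalues_symmetric:
  fixes M :: "real^'n^'n"
  assumes sym: "transpose M = M"
  shows "finite {c. is_eigenvalue M c}"
proof -
  let ?S = "{c. is_eigenvalue M c}"
  define v where "v c = (SOME v. v \<noteq> 0 \<and> M *v v = c *\<^sub>R v)" for c
  have v: "v c \<noteq> 0 \<and> M *v v c = c *\<^sub>R v c" if "c \<in> ?S" for c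
    using that unfolding v_def is_eigenvalue_def by (metis (mono_tags, lifting) someI_ex mem_Collect_eq)
  have orth: "v c \<bullet> v d = 0" if "c \<in> ?S" "d \<in> ?S" "c \<noteq> d" for c d
  proof -
    have "v c \<bullet> (M *v v d) = (M *v v c) \<bullet> v d"
      by (rule inner_matrix_vector_symmetric[OF sym])
    then have "d * (v c \<bullet> v d) = c * (v c \<bullet> v d)"
      using v[OF that(1)] v[OF that(2)] by simp
    then show ?thesis
      using that(3) by simp
  qed
  have "inj_on v ?S"
    using orth v by (fastforce intro: inj_onI)
  moreover have "independent (v ` ?S)"
    using orth v by (intro pairwise_orthogonal_independent) (auto simp: pairwise_def orthogonal_def)
  then have "finite (v ` ?S)"
    by (rule eucl.finiteI_independent)
  ultimately show ?thesis
    using finite_imageD by blast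
qed

lemma spectral_max_eqI:
  fixes M :: "real^'n^'n"
  assumes sym: "transpose M = M"
    and le: "\<And>y. quadratic_form M y \<le> l * (y \<bullet> y)"
    and "x \<noteq> 0" and eq: "quadratic_form M x = l * (x \<bullet> x)"
  shows "spectral_max M = l"
  unfolding spectral_max_def
proof (rule Max_eqI)
  show "finite {c. is_eigenvalue M c}"
    by (rule finite_eigenvalues_symmetric[OF sym])
  show "l \<in> {c. is_eigenvalue M c}"
    using eigenvector_if_quadratic_form_max[OF sym le eq] \<open>x \<noteq> 0\<close>
    by (auto simp: is_eigenvalue_def)
next
  fix c
  assume "c \<in> {c. is_eigenvalue M c}"
  then obtain v where v: "v \<noteq> 0" "M *v v = c *\<^sub>R v"
    unfolding is_eigenvalue_def by blast
  then have "c * (v \<bullet> v) \<le> l * (v \<bullet> v)"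
    using le[of v] by (simp add: quadratic_form_def)
  then show "c \<le> l"
    using v(1) by (simp add: mult_le_cancel_right)
qed

lemma spectral_max_attained:
  fixes M :: "real^'n^'n"
  assumes "transpose M = M"
  obtains x where "x \<bullet> x = 1" "quadratic_form M x = spectral_max M"
    and "\<And>y. quadratic_form M y \<le> spectral_max M * (y \<bullet> y)"
proof -
  obtain x where x: "x \<bullet> x = 1"
    and le: "\<forall>y. quadratic_form M y \<le> quadratic_form M x * (y \<bullet> y)"
    using quadratic_form_attains_max by blast
  have "x \<noteq> 0"
    using x by auto
  then have "spectral_max M = quadratic_form M x"
    using spectral_max_eqI[OF assms, of "quadratic_form M x" x] le x by auto
  then show ?thesis
    using that x le by auto
qed

lemma quadratic_form_le_spectral_max:
  fixes M :: "real^'n^'n"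
  assumes "transpose M = M"
  shows "quadratic_form M y \<le> spectral_max M * (y \<bullet> y)"
  using spectral_max_attained[OF assms] by metis

lemma spectral_max_scaleR:
  fixes M :: "real^'n^'n"
  assumes sym: "transpose M = M" and "0 \<le> c"
  shows "spectral_max (c *\<^sub>R M) = c * spectral_max M"
proof -
  obtain x where x: "x \<bullet> x = 1" "quadratic_form M x = spectral_max M"
    using spectral_max_attained[OF sym] by blast
  show ?thesis
  proof (rule spectral_max_eqI[where x = x])
    show "transpose (c *\<^sub>R M) = c *\<^sub>R M"
      using sym by (simp add: transpose_scalar)
    show "quadratic_form (c *\<^sub>R M) y \<le> c * spectral_max M * (y \<bullet> y)" for y
      using mult_left_mono[OF quadratic_form_le_spectral_max[OF sym, of y] \<open>0 \<le> c\<close>]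
      unfolding quadratic_form_scaleR_matrix by (simp only: mult.assoc)
    show "x \<noteq> 0"
      using x(1) by auto
    show "quadratic_form (c *\<^sub>R M) x = c * spectral_max M * (x \<bullet> x)"
      using x by (simp add: quadratic_form_scaleR_matrix)
  qed
qed

text \<open>Replacing a maximiser by its entrywise absolute value cannot decrease the form.\<close>

lemma spectral_max_nonneg_maximiser:
  fixes M :: "real^'n^'n"
  assumes sym: "transpose M = M" and nonneg: "\<And>i j. 0 \<le> M$i$j"
  obtains x where "x \<noteq> 0" "\<And>i. 0 \<le> x$i" "quadratic_form M x = spectral_max M * (x \<bullet> x)"
proof -
  obtain x where x: "x \<bullet> x = 1" "quadratic_form M x = spectral_max M"
    using spectral_max_attained[OF sym] by blast
  define y where "y = (\<chi> i. \<bar>x$i\<bar>)"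
  have "y \<bullet> y = x \<bullet> x"
    by (simp add: y_def inner_vec_def)
  with x(1) have yy: "y \<bullet> y = 1"
    by simp
  have "quadratic_form M x \<le> quadratic_form M y"
    unfolding quadratic_form_eq_sum
  proof (intro sum_mono)
    fix i j
    have "x$i * M$i$j * x$j \<le> \<bar>x$i * M$i$j * x$j\<bar>"
      by simp
    then show "x$i * M$i$j * x$j \<le> y$i * M$i$j * y$j"
      using nonneg[of i j] by (simp add: y_def abs_mult)
  qed
  then have "quadratic_form M y = spectral_max M * (y \<bullet> y)"
    using quadratic_form_le_spectral_max[OF sym, of y] x yy by simp
  moreover have "y \<noteq> 0"
    using yy by auto
  moreover have "0 \<le> y$i" for i
    by (simp add: y_def)
  ultimately show ?thesis
    using that[of y] by blast
qed

lemma spectral_max_combination_le: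
  fixes M N :: "real^'n^'n"
  assumes "transpose M = M" "transpose N = N" and "0 \<le> a" "0 \<le> b"
  shows "spectral_max (a *\<^sub>R M + b *\<^sub>R N) \<le> a * spectral_max M + b * spectral_max N"
proof -
  have "transpose (a *\<^sub>R M + b *\<^sub>R N) = a *\<^sub>R M + b *\<^sub>R N"
    using assms by (simp add: transpose_add transpose_scalar)
  then obtain x where xx: "x \<bullet> x = 1"
    and x: "quadratic_form (a *\<^sub>R M + b *\<^sub>R N) x = spectral_max (a *\<^sub>R M + b *\<^sub>R N)"
    using spectral_max_attained by blast
  have "a * quadratic_form M x \<le> a * spectral_max M" "b * quadratic_form N x \<le> b * spectral_max N"
    using quadratic_form_le_spectral_max[OF assms(1), of x] quadratic_form_le_spectral_max[OF assms(2), of x]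
      assms(3,4) xx by (auto intro: mult_left_mono)
  then show ?thesis
    using x by (simp add: quadratic_form_add quadratic_form_scaleR_matrix)
qed

lemma common_eigenvector_if_spectral_max_combination_eq:
  fixes M N :: "real^'n^'n"
  assumes symM: "transpose M = M" and symN: "transpose N = N" and "0 < a" "0 < b"
    and eq: "spectral_max (a *\<^sub>R M + b *\<^sub>R N) = a * spectral_max M + b * spectral_max N"
    and x: "quadratic_form (a *\<^sub>R M + b *\<^sub>R N) x = spectral_max (a *\<^sub>R M + b *\<^sub>R N) * (x \<bullet> x)"
  shows "M *v x = spectral_max M *\<^sub>R x" and "N *v x = spectral_max N *\<^sub>R x"
proof -
  have leM: "quadratic_form M x \<le> spectral_max M * (x \<bullet> x)"
    and leN: "quadratic_form N x \<le> spectral_max N * (x \<bullet> x)"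
    using quadratic_form_le_spectral_max symM symN by blast+
  define gapM where "gapM = spectral_max M * (x \<bullet> x) - quadratic_form M x"
  define gapN where "gapN = spectral_max N * (x \<bullet> x) - quadratic_form N x"
  have "a * gapM + b * gapN = 0"
    using x eq by (simp add: gapM_def gapN_def quadratic_form_add quadratic_form_scaleR_matrix algebra_simps)
  moreover have "0 \<le> a * gapM" "0 \<le> b * gapN"
    using leM leN \<open>0 < a\<close> \<open>0 < b\<close> by (simp_all add: gapM_def gapN_def)
  ultimately have "a * gapM = 0" "b * gapN = 0"
    by linarith+
  then have "quadratic_form M x = spectral_max M * (x \<bullet> x)"
    and "quadratic_form N x = spectral_max N * (x \<bullet> x)"
    using \<open>0 < a\<close> \<open>0 < b\<close> by (simp_all add: gapM_def gapN_def)
  then show "M *v x = spectral_max M *\<^sub>R x" and "N *v x = spectral_max N *\<^sub>R x"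
    using eigenvector_if_quadratic_form_max[OF symM quadratic_form_le_spectral_max[OF symM]]
      eigenvector_if_quadratic_form_max[OF symN quadratic_form_le_spectral_max[OF symN]]
    by blast+
qed

section \<open>Graph matrices\<close>

lemma transpose_adj_matrix: "simple_graph E \<Longrightarrow> transpose (adj_matrix E) = adj_matrix E"
  by (simp add: vec_eq_iff transpose_def adj_matrix_def simple_graph_def)

lemma transpose_deg_matrix: "transpose (deg_matrix E) = deg_matrix E"
  by (simp add: vec_eq_iff transpose_def deg_matrix_def)

lemma transpose_signless_laplacian:
  "simple_graph E \<Longrightarrow> transpose (signless_laplacian E) = signless_laplacian E"
  by (simp add: signless_laplacian_def transpose_add transpose_adj_matrix transpose_deg_matrix)

lemma transpose_A_alpha: "simple_graph E \<Longrightarrow> transpose (A_alpha \<alpha> E) = A_alpha \<alpha> E"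
  by (simp add: A_alpha_def transpose_add transpose_scalar transpose_adj_matrix transpose_deg_matrix)

lemma A_alpha_nonneg: "0 \<le> \<alpha> \<Longrightarrow> \<alpha> \<le> 1 \<Longrightarrow> 0 \<le> A_alpha \<alpha> E $ i $ j"
  by (simp add: adj_matrix_def deg_matrix_def A_alpha_def degree_def)

lemma A_alpha_eq_signless_laplacian_adj:
  "A_alpha \<alpha> E = \<alpha> *\<^sub>R signless_laplacian E + (1 - 2 * \<alpha>) *\<^sub>R adj_matrix E"
  by (simp add: vec_eq_iff A_alpha_def signless_laplacian_def algebra_simps)

lemma A_alpha_eq_signless_laplacian_deg:
  "A_alpha \<alpha> E = (1 - \<alpha>) *\<^sub>R signless_laplacian E + (2 * \<alpha> - 1) *\<^sub>R deg_matrix E"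
  by (simp add: vec_eq_iff A_alpha_def signless_laplacian_def algebra_simps)

lemma deg_matrix_mult: "(deg_matrix E *v x) $ i = degree E i * x $ i"
proof -
  have "(deg_matrix E *v x) $ i = (\<Sum>j\<in>UNIV. (if i = j then degree E i else 0) * x $ j)"
    by (simp add: matrix_vector_mult_def deg_matrix_def)
  also have "\<dots> = (\<Sum>j\<in>UNIV. if i = j then degree E i * x $ j else 0)"
    by (rule sum.cong) auto
  finally show ?thesis
    by simp
qed

lemma adj_matrix_mult: "(adj_matrix E *v x) $ i = (\<Sum>j\<in>{j. E i j}. x $ j)"
proof -
  have "(adj_matrix E *v x) $ i = (\<Sum>j\<in>UNIV. if E i j then x $ j else 0)"
    unfolding matrix_vector_mult_def adj_matrix_def by (auto intro!: sum.cong)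
  then show ?thesis
    by (simp add: sum.inter_filter[symmetric])
qed

lemma degree_le_max_degree: "degree E u \<le> max_degree E"
  unfolding max_degree_def by (rule Max_ge) auto

lemma spectral_max_deg_matrix: "spectral_max (deg_matrix E) = max_degree E"
proof -
  have quadratic_form_deg: "quadratic_form (deg_matrix E) y = (\<Sum>i\<in>UNIV. degree E i * (y$i * y$i))" for y
    by (simp add: quadratic_form_def inner_vec_def deg_matrix_mult algebra_simps)
  have "max_degree E \<in> range (degree E)"
    unfolding max_degree_def by (rule Max_in) auto
  then obtain u where u: "degree E u = max_degree E"
    by auto
  show ?thesis
  proof (rule spectral_max_eqI[OF transpose_deg_matrix])
    show "quadratic_form (deg_matrix E) y \<le> max_degree E * (y \<bullet> y)" for y
    proof -
      have "degree E i * (y$i * y$i) \<le> max_degree E * (y$i * y$i)" for i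
        by (rule mult_right_mono[OF degree_le_max_degree]) simp
      then show ?thesis
        unfolding quadratic_form_deg inner_vec_def inner_real_def sum_distrib_left by (rule sum_mono)
    qed
    show "axis u (1::real) \<noteq> 0"
      by (simp add: axis_eq_0_iff)
    show "quadratic_form (deg_matrix E) (axis u 1) = max_degree E * (axis u 1 \<bullet> axis u (1::real))"
      unfolding quadratic_form_deg inner_axis_axis using u by (simp add: axis_def if_distrib cong: if_cong)
  qed
qed

text \<open>Perron--Frobenius in its weakest form: a zero entry propagates along edges.\<close>

lemma adj_eigenvector_nonneg_nonzero_entries:
  fixes x :: "real^'n"
  assumes "connected_graph E" and nonneg: "\<And>i. 0 \<le> x$i" and "x \<noteq> 0"
    and eigen: "adj_matrix E *v x = a *\<^sub>R x"
  shows "x$u \<noteq> 0"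
proof -
  have zero_step: "x$v = 0" if "E w v" "x$w = 0" for w v
  proof -
    have "(\<Sum>j\<in>{j. E w j}. x $ j) = 0"
      using arg_cong[OF eigen, of "\<lambda>z. z$w"] that(2) by (simp add: adj_matrix_mult)
    then show ?thesis
      using that(1) nonneg by (simp add: sum_nonneg_eq_0_iff)
  qed
  have "x$v = 0" if "E\<^sup>*\<^sup>* w v" "x$w = 0" for w v
    using that by (induction rule: rtranclp_induct) (auto intro: zero_step)
  moreover obtain i where "x$i \<noteq> 0"
    using \<open>x \<noteq> 0\<close> by (auto simp: vec_eq_iff)
  ultimately show ?thesis
    using \<open>connected_graph E\<close> unfolding connected_graph_def by metis
qed

lemma regular_if_common_nonneg_eigenvector:
  fixes x :: "real^'n"
  assumes "connected_graph E" and "\<And>i. 0 \<le> x$i" and "x \<noteq> 0"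
    and "adj_matrix E *v x = a *\<^sub>R x" and deg: "deg_matrix E *v x = c *\<^sub>R x"
  shows "\<not> irregular E"
proof -
  have "degree E u = c" for u
    using arg_cong[OF deg, of "\<lambda>z. z$u"] adj_eigenvector_nonneg_nonzero_entries[OF assms(1-4)]
    by (simp add: deg_matrix_mult)
  then show ?thesis
    unfolding irregular_def by simp
qed

section \<open>The spectral radius of \<open>A\<^sub>\<alpha>\<close>\<close>

lemma spectral_max_A_alpha_le_signless_adj:
  assumes "simple_graph E" and "0 \<le> \<alpha>" "\<alpha> \<le> 1/2"
  shows "spectral_max (A_alpha \<alpha> E)
    \<le> \<alpha> * spectral_max (signless_laplacian E) + (1 - 2*\<alpha>) * spectral_max (adj_matrix E)"
  unfolding A_alpha_eq_signless_laplacian_adj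
  using assms by (intro spectral_max_combination_le transpose_signless_laplacian transpose_adj_matrix) auto

lemma spectral_max_A_alpha_le_signless_deg:
  assumes "simple_graph E" and "1/2 \<le> \<alpha>" "\<alpha> \<le> 1"
  shows "spectral_max (A_alpha \<alpha> E)
    \<le> (1 - \<alpha>) * spectral_max (signless_laplacian E) + (2*\<alpha> - 1) * max_degree E"
  unfolding A_alpha_eq_signless_laplacian_deg spectral_max_deg_matrix[symmetric]
  using assms by (intro spectral_max_combination_le transpose_signless_laplacian transpose_deg_matrix) auto

lemma spectral_max_A_alpha_half:
  assumes "simple_graph E"
  shows "spectral_max (A_alpha (1/2) E) = 1/2 * spectral_max (signless_laplacian E)"
  using spectral_max_scaleR[OF transpose_signless_laplacian[OF assms], of "1/2"]
  by (simp add: A_alpha_eq_signless_laplacian_adj)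

lemma nonneg_maximiser_A_alpha:
  assumes "simple_graph E" and "0 \<le> \<alpha>" "\<alpha> \<le> 1"
  obtains x where "x \<noteq> 0" "\<And>i. 0 \<le> x$i"
    "quadratic_form (A_alpha \<alpha> E) x = spectral_max (A_alpha \<alpha> E) * (x \<bullet> x)"
  using spectral_max_nonneg_maximiser[OF transpose_A_alpha A_alpha_nonneg] assms by blast

lemma spectral_max_A_alpha_eq_signless_adj_iff:
  assumes g: "simple_graph E" and "connected_graph E" "irregular E" and "0 \<le> \<alpha>" "\<alpha> \<le> 1/2"
  shows "spectral_max (A_alpha \<alpha> E)
      = \<alpha> * spectral_max (signless_laplacian E) + (1 - 2*\<alpha>) * spectral_max (adj_matrix E)
    \<longleftrightarrow> \<alpha> = 0 \<or> \<alpha> = 1/2"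
proof
  assume eq: "spectral_max (A_alpha \<alpha> E)
      = \<alpha> * spectral_max (signless_laplacian E) + (1 - 2*\<alpha>) * spectral_max (adj_matrix E)"
  show "\<alpha> = 0 \<or> \<alpha> = 1/2"
  proof (rule ccontr)
    assume "\<not> (\<alpha> = 0 \<or> \<alpha> = 1/2)"
    with assms have \<alpha>: "0 < \<alpha>" "0 < 1 - 2*\<alpha>" by auto
    obtain x where x: "x \<noteq> 0" "\<And>i. 0 \<le> x$i"
      and max: "quadratic_form (A_alpha \<alpha> E) x = spectral_max (A_alpha \<alpha> E) * (x \<bullet> x)"
      using nonneg_maximiser_A_alpha[OF g, of \<alpha>] assms by force
    have Q: "signless_laplacian E *v x = spectral_max (signless_laplacian E) *\<^sub>R x"
      and A: "adj_matrix E *v x = spectral_max (adj_matrix E) *\<^sub>R x"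
      using common_eigenvector_if_spectral_max_combination_eq
        [OF transpose_signless_laplacian[OF g] transpose_adj_matrix[OF g] \<alpha>]
        eq max unfolding A_alpha_eq_signless_laplacian_adj by blast+
    have "deg_matrix E *v x = signless_laplacian E *v x - adj_matrix E *v x"
      by (simp add: signless_laplacian_def matrix_vector_mult_add_rdistrib)
    then have "deg_matrix E *v x
        = (spectral_max (signless_laplacian E) - spectral_max (adj_matrix E)) *\<^sub>R x"
      using Q A by (simp add: scaleR_diff_left)
    then show False
      using regular_if_common_nonneg_eigenvector[OF \<open>connected_graph E\<close> x(2) x(1) A] \<open>irregular E\<close> by blast
  qed
next
  assume "\<alpha> = 0 \<or> \<alpha> = 1/2"
  then show "spectral_max (A_alpha \<alpha> E)
      = \<alpha> * spectral_max (signless_laplacian E) + (1 - 2*\<alpha>) * spectral_max (adj_matrix E)"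
  proof
    assume "\<alpha> = 0"
    then show ?thesis
      by (simp add: A_alpha_def)
  next
    assume half: "\<alpha> = 1/2"
    show ?thesis
      unfolding half using spectral_max_A_alpha_half[OF g] by simp
  qed
qed

lemma spectral_max_A_alpha_eq_signless_deg_iff:
  assumes g: "simple_graph E" and "connected_graph E" "irregular E" and "1/2 \<le> \<alpha>" "\<alpha> \<le> 1"
  shows "spectral_max (A_alpha \<alpha> E)
      = (1 - \<alpha>) * spectral_max (signless_laplacian E) + (2*\<alpha> - 1) * max_degree E
    \<longleftrightarrow> \<alpha> = 1/2 \<or> \<alpha> = 1"
proof
  assume eq: "spectral_max (A_alpha \<alpha> E)
      = (1 - \<alpha>) * spectral_max (signless_laplacian E) + (2*\<alpha> - 1) * max_degree E"
  show "\<alpha> = 1/2 \<or> \<alpha> = 1"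
  proof (rule ccontr)
    assume "\<not> (\<alpha> = 1/2 \<or> \<alpha> = 1)"
    with assms have \<alpha>: "0 < 1 - \<alpha>" "0 < 2*\<alpha> - 1" by auto
    obtain x where x: "x \<noteq> 0" "\<And>i. 0 \<le> x$i"
      and max: "quadratic_form (A_alpha \<alpha> E) x = spectral_max (A_alpha \<alpha> E) * (x \<bullet> x)"
      using nonneg_maximiser_A_alpha[OF g, of \<alpha>] assms by force
    have Q: "signless_laplacian E *v x = spectral_max (signless_laplacian E) *\<^sub>R x"
      and D: "deg_matrix E *v x = spectral_max (deg_matrix E) *\<^sub>R x"
      using common_eigenvector_if_spectral_max_combination_eq
        [OF transpose_signless_laplacian[OF g] transpose_deg_matrix \<alpha>]
        eq max unfolding A_alpha_eq_signless_laplacian_deg spectral_max_deg_matrix by blast+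
    have "adj_matrix E *v x = signless_laplacian E *v x - deg_matrix E *v x"
      by (simp add: signless_laplacian_def matrix_vector_mult_add_rdistrib)
    then have "adj_matrix E *v x
        = (spectral_max (signless_laplacian E) - spectral_max (deg_matrix E)) *\<^sub>R x"
      using Q D by (simp add: scaleR_diff_left)
    then show False
      using regular_if_common_nonneg_eigenvector[OF \<open>connected_graph E\<close> x(2) x(1) _ D] \<open>irregular E\<close> by blast
  qed
next
  assume "\<alpha> = 1/2 \<or> \<alpha> = 1"
  then show "spectral_max (A_alpha \<alpha> E)
      = (1 - \<alpha>) * spectral_max (signless_laplacian E) + (2*\<alpha> - 1) * max_degree E"
  proof
    assume half: "\<alpha> = 1/2"
    show ?thesis
      unfolding half using spectral_max_A_alpha_half[OF g] by simp
  next
    assume "\<alpha> = 1"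
    then show ?thesis
      by (simp add: A_alpha_def spectral_max_deg_matrix)
  qed
qed

theorem proposition9:
  fixes E :: "'n::finite \<Rightarrow> 'n \<Rightarrow> bool"
  assumes "simple_graph E"
  shows "(\<forall>\<alpha>. 0 \<le> \<alpha> \<and> \<alpha> \<le> 1/2 \<longrightarrow>
            spectral_max (A_alpha \<alpha> E)
              \<le> \<alpha> * spectral_max (signless_laplacian E) + (1 - 2*\<alpha>) * spectral_max (adj_matrix E))
       \<and> (connected_graph E \<and> irregular E \<longrightarrow>
          (\<forall>\<alpha>. 0 \<le> \<alpha> \<and> \<alpha> \<le> 1/2 \<longrightarrow>
            (spectral_max (A_alpha \<alpha> E)
              = \<alpha> * spectral_max (signless_laplacian E) + (1 - 2*\<alpha>) * spectral_max (adj_matrix E)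
             \<longleftrightarrow> \<alpha> = 0 \<or> \<alpha> = 1/2)))
       \<and> (\<forall>\<alpha>. 1/2 \<le> \<alpha> \<and> \<alpha> \<le> 1 \<longrightarrow>
            spectral_max (A_alpha \<alpha> E)
              \<le> (1 - \<alpha>) * spectral_max (signless_laplacian E) + (2*\<alpha> - 1) * max_degree E)
       \<and> (connected_graph E \<and> irregular E \<longrightarrow>
          (\<forall>\<alpha>. 1/2 \<le> \<alpha> \<and> \<alpha> \<le> 1 \<longrightarrow>
            (spectral_max (A_alpha \<alpha> E)
              = (1 - \<alpha>) * spectral_max (signless_laplacian E) + (2*\<alpha> - 1) * max_degree E
             \<longleftrightarrow> \<alpha> = 1/2 \<or> \<alpha> = 1)))"
  using spectral_max_A_alpha_le_signless_adj spectral_max_A_alpha_eq_signless_adj_iff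
    spectral_max_A_alpha_le_signless_deg spectral_max_A_alpha_eq_signless_deg_iff assms
  by blast

end
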